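(* Let $(\theta,\varphi)$ be a random dynamical system on $\mathbb{X}=\mathbb{N}_0^L$ as in the context, and let $A:\mathcal{Q}\to\mathcal{P}(\mathbb{X})$ be a $\varphi$-invariant random set with $A_q$ nonempty and finite for all $q$. Then the following are equivalent: (I) $A$ is a weak attractor: for every finite $B\subset\mathbb{X}$, $\mathrm{dist}(\varphi^n_q(B),A_{\theta^nq})\to0$ in probability as $n\to\infty$; (II) $A$ is a forward attractor: for every finite $B\subset\mathbb{X}$, $\lim_{n\to\infty}\mathrm{dist}(\varphi^n_q(B),A_{\theta^nq})=0$ $\mathbb{P}$-a.s.; (III) $A$ is a forward point attractor: the condition in (II) holds for every $B=\{x\}$, $x\in\mathbb{X}$; (IV) $A$ is a weak point attractor: the condition in (I) holds for every $B=\{x\}$, $x\in\mathbb{X}$; (V) for every finite random set $K:\mathcal{Q}\to\mathcal{P}(\mathbb{X})$, $\mathrm{dist}(\varphi^n_q(K_q),A_{\theta^nq})\to0$ in probability as $n\to\infty$.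
   Context: $(\mathcal{Q},\mathcal{F},\mathbb{P})$ is a probability space and $\theta:\mathcal{Q}\to\mathcal{Q}$ is an invertible, measurable, $\mathbb{P}$-preserving and $\mathbb{P}$-ergodic map; $\theta^n$ denotes its iterates ($n\in\mathbb{Z}$). $\varphi:\mathbb{N}_0\times\mathcal{Q}\times\mathbb{X}\to\mathbb{X}$, $(n,q,x)\mapsto\varphi^n_q(x)$, is measurable and satisfies the cocycle property $\varphi^0_q=\mathrm{id}$, $\varphi^{n+m}_q=\varphi^n_{\theta^mq}\circ\varphi^m_q$. $d$ is the Euclidean distance on $\mathbb{X}$, $d(x,B)=\inf_{y\in B}d(x,y)$, and $\mathrm{dist}(A,B)=\sup_{x\in A}d(x,B)$ for nonempty $A,B$. A random set is a map $K:\mathcal{Q}\to\mathcal{P}(\mathbb{X})$ with $q\mapsto d(x,K_q)$ measurable for each $x\in\mathbb{X}$; it is a finite random set if $K_q$ is nonempty and finite for all $q$. A random set $A$ is $\varphi$-invariant if $\varphi^n_q(A_q)=A_{\theta^nq}$ for all $n\in\mathbb{N}$, $\mathbb{P}$-a.s. *)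

theory Defs
  imports "HOL-Probability.Probability"
begin

text \<open>State space X = N_0^L, modelled as functions from a finite index type 'l
  (with L = CARD('l)) to nat.  Euclidean distance on X.\<close>

definition edist :: "('l::finite \<Rightarrow> nat) \<Rightarrow> ('l \<Rightarrow> nat) \<Rightarrow> real" where
  "edist x y = sqrt (\<Sum>i\<in>UNIV. (real (x i) - real (y i))^2)"

definition pdist :: "('l::finite \<Rightarrow> nat) \<Rightarrow> ('l \<Rightarrow> nat) set \<Rightarrow> real" where
  "pdist x B = (INF y\<in>B. edist x y)"

definition hdist :: "('l::finite \<Rightarrow> nat) set \<Rightarrow> ('l \<Rightarrow> nat) set \<Rightarrow> real" where
  "hdist A B = (SUP x\<in>A. pdist x B)"

definition mds :: "'q measure \<Rightarrow> ('q \<Rightarrow> 'q) \<Rightarrow> bool" where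
  "mds M \<theta> \<longleftrightarrow> prob_space M \<and>
     bij_betw \<theta> (space M) (space M) \<and>
     \<theta> \<in> measurable M M \<and> inv_into (space M) \<theta> \<in> measurable M M \<and>
     distr M M \<theta> = M \<and>
     (\<forall>S\<in>sets M. \<theta> -` S \<inter> space M = S \<longrightarrow> measure M S = 0 \<or> measure M S = 1)"

definition cocycle :: "'q measure \<Rightarrow> ('q \<Rightarrow> 'q) \<Rightarrow> (nat \<Rightarrow> 'q \<Rightarrow> ('l::finite \<Rightarrow> nat) \<Rightarrow> ('l \<Rightarrow> nat)) \<Rightarrow> bool" where
  "cocycle M \<theta> \<phi> \<longleftrightarrow>
     (\<lambda>(n, q, x). \<phi> n q x) \<in> measurable (count_space UNIV \<Otimes>\<^sub>M M \<Otimes>\<^sub>M count_space UNIV) (count_space UNIV) \<and>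
     (\<forall>q. \<phi> 0 q = id) \<and>
     (\<forall>n m q. \<phi> (n + m) q = \<phi> n ((\<theta> ^^ m) q) \<circ> \<phi> m q)"

definition random_set :: "'q measure \<Rightarrow> ('q \<Rightarrow> ('l::finite \<Rightarrow> nat) set) \<Rightarrow> bool" where
  "random_set M K \<longleftrightarrow> (\<forall>x. (\<lambda>q. pdist x (K q)) \<in> borel_measurable M)"

definition finite_random_set :: "'q measure \<Rightarrow> ('q \<Rightarrow> ('l::finite \<Rightarrow> nat) set) \<Rightarrow> bool" where
  "finite_random_set M K \<longleftrightarrow> random_set M K \<and> (\<forall>q. K q \<noteq> {} \<and> finite (K q))"

definition invariant_set :: "'q measure \<Rightarrow> ('q \<Rightarrow> 'q) \<Rightarrow> (nat \<Rightarrow> 'q \<Rightarrow> ('l::finite \<Rightarrow> nat) \<Rightarrow> ('l \<Rightarrow> nat)) \<Rightarrow> ('q \<Rightarrow> ('l \<Rightarrow> nat) set) \<Rightarrow> bool" where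
  "invariant_set M \<theta> \<phi> A \<longleftrightarrow> random_set M A \<and>
     (\<forall>n\<ge>1. AE q in M. \<phi> n q ` A q = A ((\<theta> ^^ n) q))"

definition tendsto0_in_prob :: "'q measure \<Rightarrow> (nat \<Rightarrow> 'q \<Rightarrow> real) \<Rightarrow> bool" where
  "tendsto0_in_prob M X \<longleftrightarrow>
     (\<forall>\<epsilon>>0. (\<lambda>n. measure M {q\<in>space M. \<bar>X n q\<bar> > \<epsilon>}) \<longlonglongrightarrow> 0)"

definition tendsto0_AE :: "'q measure \<Rightarrow> (nat \<Rightarrow> 'q \<Rightarrow> real) \<Rightarrow> bool" where
  "tendsto0_AE M X \<longleftrightarrow> (AE q in M. (\<lambda>n. X n q) \<longlonglongrightarrow> 0)"

end

theory Submission
  imports Defs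
begin

text \<open>Distinct points of \<open>\<nat>\<^sub>0\<^sup>L\<close> are at distance at least 1, so
  \<open>dist(\<phi>^n_q(K), A_(\<theta>^n q))\<close> is 0 if \<open>\<phi>^n_q\<close> maps \<open>K\<close> into \<open>A_(\<theta>^n q)\<close> and at least 1
  otherwise. Convergence to 0 almost surely (in probability) thus means that \<open>K\<close> is almost
  surely eventually absorbed by \<open>A\<close> (absorbed with probability tending to 1). By invariance of
  \<open>A\<close> and the cocycle property a point once absorbed stays absorbed, so for a single point the
  absorption events increase with \<open>n\<close>, and probabilities tending to 1 force almost sure eventual
  absorption. As \<open>\<nat>\<^sub>0\<^sup>L\<close> is countable, almost surely every point is eventually absorbed,
  hence so is every finite, possibly random, set.\<close>

lemma edist_nonneg: "0 \<le> edist x y"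
  unfolding edist_def by (simp add: sum_nonneg)

lemma edist_ge_1:
  fixes x y :: "'l::finite \<Rightarrow> nat"
  assumes "x \<noteq> y"
  shows "1 \<le> edist x y"
proof -
  obtain i where i: "x i \<noteq> y i" using assms by auto
  have "1 \<le> \<bar>real (x i) - real (y i)\<bar>" using i by linarith
  then have "1 \<le> (real (x i) - real (y i))\<^sup>2"
    by (metis abs_le_square_iff abs_one power_one)
  also have "\<dots> \<le> (\<Sum>j\<in>UNIV. (real (x j) - real (y j))\<^sup>2)"
    by (rule member_le_sum) auto
  finally show ?thesis unfolding edist_def by simp
qed

lemma pdist_eq_0:
  assumes "x \<in> B"
  shows "pdist x B = 0"
proof -
  have "pdist x B \<le> edist x x"
    unfolding pdist_def using assms
    by (intro cINF_lower bdd_belowI[where m=0]) (auto simp: edist_nonneg)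
  moreover have "0 \<le> pdist x B"
    unfolding pdist_def using assms by (intro cINF_greatest edist_nonneg) auto
  ultimately show ?thesis by (simp add: edist_def)
qed

lemma pdist_ge_1:
  assumes "B \<noteq> {}" "x \<notin> B"
  shows "1 \<le> pdist x B"
  unfolding pdist_def using assms by (intro cINF_greatest edist_ge_1) auto

lemma pdist_eq_0_iff:
  assumes "B \<noteq> {}"
  shows "pdist x B = 0 \<longleftrightarrow> x \<in> B"
  using pdist_ge_1[OF assms, of x] by (cases "x \<in> B") (auto simp: pdist_eq_0)

lemma hdist_eq_0:
  assumes "S \<noteq> {}" "S \<subseteq> T"
  shows "hdist S T = 0"
proof -
  have "hdist S T = (SUP x\<in>S. 0)"
    unfolding hdist_def using assms(2) by (intro SUP_cong) (auto intro: pdist_eq_0)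
  with assms(1) show ?thesis by simp
qed

lemma hdist_ge_1:
  assumes "finite S" "T \<noteq> {}" "\<not> S \<subseteq> T"
  shows "1 \<le> hdist S T"
proof -
  obtain x where x: "x \<in> S" "x \<notin> T" using assms(3) by auto
  have "1 \<le> pdist x T" using pdist_ge_1 assms(2) x(2) .
  also have "\<dots> \<le> hdist S T"
    unfolding hdist_def using assms(1) x(1) by (intro cSUP_upper) auto
  finally show ?thesis .
qed

lemma tendsto0_AE_iff_AE_eventually:
  assumes "\<And>n q. P n q \<Longrightarrow> X n q = 0" and "\<And>n q. \<not> P n q \<Longrightarrow> 1 \<le> X n q"
  shows "tendsto0_AE M X \<longleftrightarrow> (AE q in M. eventually (\<lambda>n. P n q) sequentially)"
  unfolding tendsto0_AE_def
proof (rule AE_cong)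
  fix q
  show "(\<lambda>n. X n q) \<longlonglongrightarrow> 0 \<longleftrightarrow> eventually (\<lambda>n. P n q) sequentially"
  proof
    assume "(\<lambda>n. X n q) \<longlonglongrightarrow> 0"
    then have "eventually (\<lambda>n. X n q < 1) sequentially" by (rule order_tendstoD) simp
    then show "eventually (\<lambda>n. P n q) sequentially"
      by (rule eventually_mono) (use assms(2) in force)
  next
    assume "eventually (\<lambda>n. P n q) sequentially"
    then have "eventually (\<lambda>n. X n q = 0) sequentially"
      by (rule eventually_mono) (use assms(1) in force)
    then show "(\<lambda>n. X n q) \<longlonglongrightarrow> 0" by (rule tendsto_eventually)
  qed
qed

lemma (in finite_measure) tendsto0_in_prob_iff_tendsto_prob_not:
  assumes "\<And>n q. P n q \<Longrightarrow> X n q = 0" and "\<And>n q. \<not> P n q \<Longrightarrow> 1 \<le> X n q"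
    and meas: "\<And>n. Measurable.pred M (P n)"
  shows "tendsto0_in_prob M X \<longleftrightarrow> (\<lambda>n. \<P>(q in M. \<not> P n q)) \<longlonglongrightarrow> 0"
  unfolding tendsto0_in_prob_def
proof safe
  assume lim: "\<forall>\<epsilon>>0. (\<lambda>n. \<P>(q in M. \<epsilon> < \<bar>X n q\<bar>)) \<longlonglongrightarrow> 0"
  have "{q\<in>space M. 1/2 < \<bar>X n q\<bar>} = {q\<in>space M. \<not> P n q}" for n
    using assms(1,2) by force
  with lim[rule_format, of "1/2"] show "(\<lambda>n. \<P>(q in M. \<not> P n q)) \<longlonglongrightarrow> 0" by simp
next
  fix \<epsilon> :: real
  assume lim: "(\<lambda>n. \<P>(q in M. \<not> P n q)) \<longlonglongrightarrow> 0" and "0 < \<epsilon>"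
  then have "\<P>(q in M. \<epsilon> < \<bar>X n q\<bar>) \<le> \<P>(q in M. \<not> P n q)" for n
    using assms(1) meas by (intro finite_measure_mono) auto
  then show "(\<lambda>n. \<P>(q in M. \<epsilon> < \<bar>X n q\<bar>)) \<longlonglongrightarrow> 0"
    by (intro tendsto_sandwich[OF _ _ tendsto_const lim]) auto
qed

lemma (in prob_space) tendsto_prob_not_0_if_AE_eventually:
  assumes "\<And>n. Measurable.pred M (P n)"
    and "AE q in M. eventually (\<lambda>n. P n q) sequentially"
  shows "(\<lambda>n. \<P>(q in M. \<not> P n q)) \<longlonglongrightarrow> 0"
proof -
  have "(\<lambda>n. LINT q|M. indicator {q\<in>space M. \<not> P n q} q) \<longlonglongrightarrow> (LINT q|M. 0 :: real)"
  proof (rule integral_dominated_convergence[where w="\<lambda>_. 1"])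
    show "AE q in M. (\<lambda>n. indicator {q\<in>space M. \<not> P n q} q :: real) \<longlonglongrightarrow> 0"
      using assms(2) by eventually_elim (auto elim!: eventually_mono intro: tendsto_eventually)
  qed (use assms(1) in auto)
  then show ?thesis by (simp add: Int_absorb2 Collect_subset)
qed

lemma (in prob_space) AE_eventually_if_tendsto_prob_not_0_mono:
  assumes meas: "\<And>n. Measurable.pred M (P n)"
    and mono: "AE q in M. \<forall>n. P n q \<longrightarrow> P (Suc n) q"
    and lim: "(\<lambda>n. \<P>(q in M. \<not> P n q)) \<longlonglongrightarrow> 0"
  shows "AE q in M. eventually (\<lambda>n. P n q) sequentially"
proof -
  let ?never = "\<lambda>q. \<not> eventually (\<lambda>n. P n q) sequentially"
  have "\<P>(q in M. ?never q) \<le> \<P>(q in M. \<not> P n q)" for n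
  proof (rule finite_measure_mono_AE)
    show "AE q in M. q \<in> {q\<in>space M. ?never q} \<longrightarrow> q \<in> {q\<in>space M. \<not> P n q}"
      using mono
    proof eventually_elim
      case (elim q)
      have "P k q" if "P n q" "n \<le> k" for k
        using that(2) by (induction k rule: dec_induct) (use that(1) elim in auto)
      then show ?case by (auto simp: eventually_sequentially)
    qed
  qed (use meas in auto)
  then have "\<P>(q in M. ?never q) \<le> 0"
    by (intro LIMSEQ_le_const[OF lim]) auto
  then have "\<P>(q in M. ?never q) = 0" by (simp add: order_antisym)
  then show ?thesis using meas by (subst (asm) prob_Collect_eq_0) auto
qed

lemma measurable_funpow: "f \<in> M \<rightarrow>\<^sub>M M \<Longrightarrow> f ^^ n \<in> M \<rightarrow>\<^sub>M M"
  by (induction n) auto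

lemma AE_funpow_if_distr_eq:
  assumes f: "f \<in> M \<rightarrow>\<^sub>M M" and distr: "distr M M f = M" and "AE q in M. P q"
  shows "AE q in M. P ((f ^^ n) q)"
proof (induction n)
  case (Suc n)
  then have "AE q in distr M M f. P ((f ^^ n) q)" unfolding distr .
  from AE_distrD[OF f this] show ?case by (simp add: funpow_Suc_right del: funpow.simps)
qed (use assms(3) in simp)

lemma measurable_cocycle:
  assumes "cocycle M \<theta> \<phi>"
  shows "(\<lambda>q. \<phi> n q x) \<in> M \<rightarrow>\<^sub>M count_space UNIV"
proof -
  have "(\<lambda>(n, q, x). \<phi> n q x) \<in> count_space UNIV \<Otimes>\<^sub>M M \<Otimes>\<^sub>M count_space UNIV \<rightarrow>\<^sub>M count_space UNIV"
    using assms unfolding cocycle_def by blast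
  moreover have "(\<lambda>q. (n, q, x)) \<in> M \<rightarrow>\<^sub>M count_space UNIV \<Otimes>\<^sub>M M \<Otimes>\<^sub>M count_space UNIV"
    by measurable
  ultimately show ?thesis by (simp add: measurable_comp[unfolded comp_def])
qed

lemma pred_mem_random_set:
  assumes "random_set M K" "\<And>q. K q \<noteq> {}"
  shows "Measurable.pred M (\<lambda>q. x \<in> K q)"
proof -
  have "(\<lambda>q. pdist x (K q)) \<in> borel_measurable M"
    using assms(1) unfolding random_set_def by blast
  then have "Measurable.pred M (\<lambda>q. pdist x (K q) \<in> {0})"
    by (rule pred_sets2[rotated]) simp
  then show ?thesis by (simp add: pdist_eq_0_iff assms(2))
qed

locale rds_invariant_set = prob_space M
  for M :: "'q measure" and \<theta> :: "'q \<Rightarrow> 'q"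
    and \<phi> :: "nat \<Rightarrow> 'q \<Rightarrow> ('l::finite \<Rightarrow> nat) \<Rightarrow> ('l \<Rightarrow> nat)"
    and A :: "'q \<Rightarrow> ('l \<Rightarrow> nat) set" +
  assumes measurable_\<theta>: "\<theta> \<in> M \<rightarrow>\<^sub>M M"
    and distr_\<theta>: "distr M M \<theta> = M"
    and cocycle: "cocycle M \<theta> \<phi>"
    and invariant: "invariant_set M \<theta> \<phi> A"
    and A_nonempty: "A q \<noteq> {}"
begin

definition absorbed :: "nat \<Rightarrow> ('l \<Rightarrow> nat) set \<Rightarrow> 'q \<Rightarrow> bool" where
  "absorbed n K q \<longleftrightarrow> \<phi> n q ` K \<subseteq> A ((\<theta> ^^ n) q)"

lemma pred_absorbed:
  assumes "\<And>x. Measurable.pred M (\<lambda>q. x \<in> K q)"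
  shows "Measurable.pred M (\<lambda>q. absorbed n (K q) q)"
proof -
  have "Measurable.pred M (\<lambda>q. y \<in> A q)" for y
    using invariant A_nonempty by (intro pred_mem_random_set) (auto simp: invariant_set_def)
  then have "Measurable.pred M (\<lambda>q. y \<in> A ((\<theta> ^^ n) q))" for y
    by (rule measurable_compose[OF measurable_funpow[OF measurable_\<theta>]])
  then have "Measurable.pred M (\<lambda>q. \<phi> n q x \<in> A ((\<theta> ^^ n) q))" for x
    by (rule measurable_compose_countable[OF _ measurable_cocycle[OF cocycle]])
  then have "Measurable.pred M (\<lambda>q. \<forall>x. x \<in> K q \<longrightarrow> \<phi> n q x \<in> A ((\<theta> ^^ n) q))"
    using assms by measurable
  then show ?thesis unfolding absorbed_def image_subset_iff Ball_def .
qed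

lemma hdist_absorbed:
  assumes "K \<noteq> {}" "absorbed n K q"
  shows "hdist (\<phi> n q ` K) (A ((\<theta> ^^ n) q)) = 0"
  using assms by (intro hdist_eq_0) (auto simp: absorbed_def)

lemma hdist_not_absorbed:
  assumes "finite K" "\<not> absorbed n K q"
  shows "1 \<le> hdist (\<phi> n q ` K) (A ((\<theta> ^^ n) q))"
  using assms A_nonempty by (intro hdist_ge_1) (auto simp: absorbed_def)

lemma tendsto0_AE_hdist_iff:
  assumes "\<And>q. K q \<noteq> {}" "\<And>q. finite (K q)"
  shows "tendsto0_AE M (\<lambda>n q. hdist (\<phi> n q ` K q) (A ((\<theta> ^^ n) q))) \<longleftrightarrow>
    (AE q in M. eventually (\<lambda>n. absorbed n (K q) q) sequentially)"
  using assms by (intro tendsto0_AE_iff_AE_eventually hdist_absorbed hdist_not_absorbed)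

lemma tendsto0_in_prob_hdist_iff:
  assumes "\<And>q. K q \<noteq> {}" "\<And>q. finite (K q)" "\<And>x. Measurable.pred M (\<lambda>q. x \<in> K q)"
  shows "tendsto0_in_prob M (\<lambda>n q. hdist (\<phi> n q ` K q) (A ((\<theta> ^^ n) q))) \<longleftrightarrow>
    (\<lambda>n. \<P>(q in M. \<not> absorbed n (K q) q)) \<longlonglongrightarrow> 0"
  using assms
  by (intro tendsto0_in_prob_iff_tendsto_prob_not hdist_absorbed hdist_not_absorbed pred_absorbed)

lemma AE_absorbed_Suc: "AE q in M. \<forall>n K. absorbed n K q \<longrightarrow> absorbed (Suc n) K q"
proof -
  have "AE q in M. \<phi> 1 q ` A q = A (\<theta> q)"
    using invariant unfolding invariant_set_def by force
  then have "AE q in M. \<forall>n. \<phi> 1 ((\<theta> ^^ n) q) ` A ((\<theta> ^^ n) q) = A (\<theta> ((\<theta> ^^ n) q))"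
    by (subst AE_all_countable) (intro allI AE_funpow_if_distr_eq[OF measurable_\<theta> distr_\<theta>])
  then show ?thesis
  proof eventually_elim
    case (elim q)
    have step: "\<phi> (Suc n) q x = \<phi> 1 ((\<theta> ^^ n) q) (\<phi> n q x)" for n x
      using cocycle unfolding cocycle_def by (metis comp_apply plus_1_eq_Suc)
    show ?case
    proof (intro allI impI)
      fix n K assume "absorbed n K q"
      then have "\<phi> (Suc n) q ` K \<subseteq> \<phi> 1 ((\<theta> ^^ n) q) ` A ((\<theta> ^^ n) q)"
        by (auto simp: absorbed_def step)
      with elim show "absorbed (Suc n) K q" by (simp add: absorbed_def)
    qed
  qed
qed

lemma AE_eventually_absorbed_if_points:
  assumes "\<And>x. AE q in M. eventually (\<lambda>n. absorbed n {x} q) sequentially"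
    and "\<And>q. finite (K q)"
  shows "AE q in M. eventually (\<lambda>n. absorbed n (K q) q) sequentially"
proof -
  have "AE q in M. \<forall>x. eventually (\<lambda>n. absorbed n {x} q) sequentially"
    using assms(1) by (simp add: AE_all_countable)
  then show ?thesis
  proof eventually_elim
    case (elim q)
    then have "eventually (\<lambda>n. \<forall>x\<in>K q. absorbed n {x} q) sequentially"
      using assms(2) by (intro eventually_ball_finite) auto
    then show ?case by (rule eventually_mono) (auto simp: absorbed_def)
  qed
qed

lemma forward_point_attraction_if_weak:
  assumes "tendsto0_in_prob M (\<lambda>n q. hdist (\<phi> n q ` {x}) (A ((\<theta> ^^ n) q)))"
  shows "tendsto0_AE M (\<lambda>n q. hdist (\<phi> n q ` {x}) (A ((\<theta> ^^ n) q)))"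
proof -
  have "(\<lambda>n. \<P>(q in M. \<not> absorbed n {x} q)) \<longlonglongrightarrow> 0"
    using assms tendsto0_in_prob_hdist_iff[of "\<lambda>_. {x}"] by simp
  then have "AE q in M. eventually (\<lambda>n. absorbed n {x} q) sequentially"
    using AE_absorbed_Suc pred_absorbed[of "\<lambda>_. {x}"]
    by (intro AE_eventually_if_tendsto_prob_not_0_mono) auto
  then show ?thesis using tendsto0_AE_hdist_iff[of "\<lambda>_. {x}"] by simp
qed

lemma forward_attraction_if_forward_points:
  assumes "\<And>x. tendsto0_AE M (\<lambda>n q. hdist (\<phi> n q ` {x}) (A ((\<theta> ^^ n) q)))"
    and "\<And>q. K q \<noteq> {}" "\<And>q. finite (K q)"
  shows "tendsto0_AE M (\<lambda>n q. hdist (\<phi> n q ` K q) (A ((\<theta> ^^ n) q)))"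
proof -
  have "AE q in M. eventually (\<lambda>n. absorbed n {x} q) sequentially" for x
    using assms(1) tendsto0_AE_hdist_iff[of "\<lambda>_. {x}"] by simp
  then show ?thesis
    using assms(2,3) by (simp add: tendsto0_AE_hdist_iff AE_eventually_absorbed_if_points)
qed

lemma weak_attraction_if_forward:
  assumes "finite_random_set M K"
    and "tendsto0_AE M (\<lambda>n q. hdist (\<phi> n q ` K q) (A ((\<theta> ^^ n) q)))"
  shows "tendsto0_in_prob M (\<lambda>n q. hdist (\<phi> n q ` K q) (A ((\<theta> ^^ n) q)))"
proof -
  have "\<And>q. K q \<noteq> {}" "\<And>q. finite (K q)" "\<And>x. Measurable.pred M (\<lambda>q. x \<in> K q)"
    using assms(1) by (auto simp: finite_random_set_def intro: pred_mem_random_set)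
  with assms(2) show ?thesis
    by (simp add: tendsto0_AE_hdist_iff tendsto0_in_prob_hdist_iff pred_absorbed
        tendsto_prob_not_0_if_AE_eventually)
qed

end

theorem theorem4p3:
  fixes M :: "'q measure" and \<theta> :: "'q \<Rightarrow> 'q"
    and \<phi> :: "nat \<Rightarrow> 'q \<Rightarrow> ('l::finite \<Rightarrow> nat) \<Rightarrow> ('l \<Rightarrow> nat)"
    and A :: "'q \<Rightarrow> ('l \<Rightarrow> nat) set"
  assumes "mds M \<theta>"
    and "cocycle M \<theta> \<phi>"
    and "invariant_set M \<theta> \<phi> A"
    and "\<forall>q. A q \<noteq> {} \<and> finite (A q)"
  defines "I \<equiv> \<forall>B. finite B \<and> B \<noteq> {} \<longrightarrow>
              tendsto0_in_prob M (\<lambda>n q. hdist (\<phi> n q ` B) (A ((\<theta> ^^ n) q)))"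
    and "II \<equiv> \<forall>B. finite B \<and> B \<noteq> {} \<longrightarrow>
              tendsto0_AE M (\<lambda>n q. hdist (\<phi> n q ` B) (A ((\<theta> ^^ n) q)))"
    and "III \<equiv> \<forall>x. tendsto0_AE M (\<lambda>n q. hdist (\<phi> n q ` {x}) (A ((\<theta> ^^ n) q)))"
    and "IV \<equiv> \<forall>x. tendsto0_in_prob M (\<lambda>n q. hdist (\<phi> n q ` {x}) (A ((\<theta> ^^ n) q)))"
    and "V \<equiv> \<forall>K. finite_random_set M K \<longrightarrow>
              tendsto0_in_prob M (\<lambda>n q. hdist (\<phi> n q ` K q) (A ((\<theta> ^^ n) q)))"
  shows "(I \<longleftrightarrow> II) \<and> (II \<longleftrightarrow> III) \<and> (III \<longleftrightarrow> IV) \<and> (IV \<longleftrightarrow> V)"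
proof -
  have "rds_invariant_set M \<theta> \<phi> A"
    using assms(1-4)
    by (auto simp: rds_invariant_set_def rds_invariant_set_axioms_def mds_def)
  then interpret rds_invariant_set M \<theta> \<phi> A .
  have const_random_set: "finite_random_set M (\<lambda>_. B)" if "finite B" "B \<noteq> {}" for B
    using that by (simp add: finite_random_set_def random_set_def)
  have "I \<Longrightarrow> IV" and "II \<Longrightarrow> III" and "V \<Longrightarrow> I"
    unfolding I_def II_def III_def IV_def V_def using const_random_set by blast+
  moreover have "IV \<Longrightarrow> III"
    unfolding III_def IV_def using forward_point_attraction_if_weak by blast
  moreover have "III \<Longrightarrow> II"
    unfolding II_def III_def using forward_attraction_if_forward_points[of "\<lambda>_. B" for B] by blast
  moreover have "III \<Longrightarrow> V"
    unfolding III_def V_def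
    using forward_attraction_if_forward_points weak_attraction_if_forward
    by (auto simp: finite_random_set_def)
  ultimately show ?thesis by blast
qed

end
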